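(* Let $A$ be an abelian topological group such that $\alpha_A$ is continuous. Then $\hat A$ has the quasi-convex compactness property.
   Context: $\mathbb{T}=\mathbb{R}/\mathbb{Z}$, $\Lambda_1$ is the image of $[-\tfrac14,\tfrac14]$ in $\mathbb{T}$. For an abelian topological group $B$, $\hat B$ is the group of continuous homomorphisms $B\to\mathbb{T}$ with the compact-open topology and $\alpha_B\colon B\to\hat{\hat B}$, $\alpha_B(b)(\chi)=\chi(b)$. For $S\subseteq B$, $S^\vartriangleright=\{\chi\in\hat B\mid\chi(S)\subseteq\Lambda_1\}$; for $\Phi\subseteq\hat B$, $\Phi^\vartriangleleft=\{b\in B\mid\chi(b)\in\Lambda_1\ \forall\chi\in\Phi\}$. $B$ has the quasi-convex compactness property (QCP) if for every compact $K\subseteq B$ the set $K^{\vartriangleright\vartriangleleft}$ (polars taken with respect to the pair $B,\hat B$) is compact. For $B=\hat A$, the polars are taken with respect to the pair $\hat A,\hat{\hat A}$. *)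

theory Defs
  imports "HOL-Analysis.Analysis"
begin

text \<open>The circle group T = R/Z is represented as the unit circle in the complex
plane (via t \<mapsto> exp(2 pi i t)), with complex multiplication as group operation.
Under this identification Lambda_1 = image of [-1/4,1/4] is the closed right half circle.\<close>

definition Lambda1 :: "complex set" where
  "Lambda1 = {z. cmod z = 1 \<and> 0 \<le> Re z}"

text \<open>Continuous characters of a topological group with carrier topspace X and
group operation m. Characters are made extensional (value 1 off the carrier).\<close>
definition characters :: "'b topology \<Rightarrow> ('b \<Rightarrow> 'b \<Rightarrow> 'b) \<Rightarrow> ('b \<Rightarrow> complex) set" where
  "characters X m = {c. continuous_map X euclidean c
      \<and> (\<forall>x\<in>topspace X. cmod (c x) = 1)
      \<and> (\<forall>x\<in>topspace X. \<forall>y\<in>topspace X. c (m x y) = c x * c y)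
      \<and> (\<forall>x. x \<notin> topspace X \<longrightarrow> c x = 1)}"

definition compact_open :: "'b topology \<Rightarrow> ('b \<Rightarrow> complex) set \<Rightarrow> ('b \<Rightarrow> complex) topology" where
  "compact_open X S = topology_generated_by
      {{c \<in> S. c ` K \<subseteq> U} | K U. compactin X K \<and> open U}"

definition dual_top :: "'b topology \<Rightarrow> ('b \<Rightarrow> 'b \<Rightarrow> 'b) \<Rightarrow> ('b \<Rightarrow> complex) topology" where
  "dual_top X m = compact_open X (characters X m)"

definition char_mult :: "('b \<Rightarrow> complex) \<Rightarrow> ('b \<Rightarrow> complex) \<Rightarrow> ('b \<Rightarrow> complex)" where
  "char_mult f g = (\<lambda>x. f x * g x)"

definition polar_r :: "'b topology \<Rightarrow> ('b \<Rightarrow> 'b \<Rightarrow> 'b) \<Rightarrow> 'b set \<Rightarrow> ('b \<Rightarrow> complex) set" where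
  "polar_r X m S = {c \<in> characters X m. c ` S \<subseteq> Lambda1}"

definition polar_l :: "'b topology \<Rightarrow> ('b \<Rightarrow> 'b \<Rightarrow> 'b) \<Rightarrow> ('b \<Rightarrow> complex) set \<Rightarrow> 'b set" where
  "polar_l X m \<Phi> = {b \<in> topspace X. \<forall>c\<in>\<Phi>. c b \<in> Lambda1}"

definition QCP :: "'b topology \<Rightarrow> ('b \<Rightarrow> 'b \<Rightarrow> 'b) \<Rightarrow> bool" where
  "QCP X m \<longleftrightarrow> (\<forall>K. compactin X K \<longrightarrow> compactin X (polar_l X m (polar_r X m K)))"

definition alpha :: "'b topology \<Rightarrow> ('b \<Rightarrow> 'b \<Rightarrow> 'b) \<Rightarrow> 'b \<Rightarrow> (('b \<Rightarrow> complex) \<Rightarrow> complex)" where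
  "alpha X m a = (\<lambda>c. if c \<in> characters X m then c a else 1)"

end

theory Submission
  imports Defs
begin

text \<open>Let \<open>K\<close> be compact in the dual. Continuity of \<open>\<alpha>\<close> makes
\<open>V = {a. Re \<psi>(a) > 0 for all \<psi> \<in> K}\<close> an open neighbourhood of \<open>0\<close>, being the preimage
of a subbasic open set of the bidual, and \<open>K\<^sup>\<rhd>\<^sup>\<lhd> \<subseteq> V\<^sup>\<rhd>\<close>. Since \<open>K\<^sup>\<rhd>\<^sup>\<lhd>\<close> is closed, it suffices
that the polar \<open>V\<^sup>\<rhd>\<close> of a neighbourhood of \<open>0\<close> is compact in the compact-open topology.
If \<open>z\<^bsup>2\<^sup>k\<^esup> \<in> \<Lambda>\<^sub>1\<close> for all \<open>k \<le> j\<close> then \<open>|z - 1|\<^sup>2 \<le> 2/2\<^sup>j\<close>; hence all characters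
in \<open>V\<^sup>\<rhd>\<close> map the neighbourhood \<open>{x. 2\<^sup>kx \<in> V for k \<le> j}\<close> close to \<open>1\<close>, i.e. \<open>V\<^sup>\<rhd>\<close> is
equicontinuous. By Tychonoff \<open>V\<^sup>\<rhd>\<close> is compact for pointwise convergence, and on an
equicontinuous set pointwise convergence implies compact-open convergence.\<close>

lemma cmod_unit_diff_one_sq:
  fixes z :: complex
  assumes "cmod z = 1"
  shows "(cmod (z - 1))\<^sup>2 = 2 - 2 * Re z"
proof -
  have "(Re z)\<^sup>2 + (Im z)\<^sup>2 = 1" using assms by (metis cmod_power2 one_power2)
  then show ?thesis unfolding cmod_power2 by (simp add: power2_eq_square algebra_simps)
qed

lemma cmod_unit_add_one_sq:
  fixes z :: complex
  assumes "cmod z = 1"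
  shows "(cmod (z + 1))\<^sup>2 = 2 + 2 * Re z"
proof -
  have "(Re z)\<^sup>2 + (Im z)\<^sup>2 = 1" using assms by (metis cmod_power2 one_power2)
  then show ?thesis unfolding cmod_power2 by (simp add: power2_eq_square algebra_simps)
qed

lemma cmod_diff_one_sq_le_if_powers_in_Lambda1:
  fixes z :: complex
  assumes "\<forall>k\<le>j. z ^ 2 ^ k \<in> Lambda1"
  shows "(cmod (z - 1))\<^sup>2 \<le> 2 / 2 ^ j"
  using assms
proof (induction j arbitrary: z)
  case 0
  then have "cmod z = 1" "0 \<le> Re z" by (auto simp: Lambda1_def)
  then show ?case using cmod_unit_diff_one_sq by simp
next
  case (Suc j)
  have "z \<in> Lambda1" using Suc.prems by (metis power_0 power_one_right zero_le)
  then have z: "cmod z = 1" "0 \<le> Re z" by (auto simp: Lambda1_def)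
  have "(z\<^sup>2) ^ 2 ^ k \<in> Lambda1" if "k \<le> j" for k
    using Suc.prems that by (metis Suc_le_mono power_Suc power_mult)
  then have IH: "(cmod (z\<^sup>2 - 1))\<^sup>2 \<le> 2 / 2 ^ j" using Suc.IH by blast
  \<comment> \<open>\<open>|z\<^sup>2 - 1| = |z - 1| |z + 1|\<close> and \<open>|z + 1|\<^sup>2 \<ge> 2\<close> on the right half circle\<close>
  have "(cmod (z\<^sup>2 - 1))\<^sup>2 = (cmod (z - 1))\<^sup>2 * (cmod (z + 1))\<^sup>2"
  proof -
    have "z\<^sup>2 - 1 = (z - 1) * (z + 1)" by (simp add: power2_eq_square algebra_simps)
    then show ?thesis by (simp add: norm_mult power_mult_distrib)
  qed
  moreover have "2 \<le> (cmod (z + 1))\<^sup>2" using cmod_unit_add_one_sq z by simp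
  ultimately have "(cmod (z - 1))\<^sup>2 * 2 \<le> 2 / 2 ^ j"
    using IH mult_left_mono[of 2 "(cmod (z + 1))\<^sup>2" "(cmod (z - 1))\<^sup>2"]
    by (simp add: mult.commute)
  then show ?case by (simp add: field_simps)
qed

lemma closed_Lambda1: "closed Lambda1"
proof -
  have "Lambda1 = sphere 0 1 \<inter> {z. 0 \<le> Re z}" unfolding Lambda1_def by auto
  then show ?thesis by (metis closed_Int closed_halfspace_Re_ge closed_sphere)
qed

lemma closedin_all_preimages:
  assumes "\<And>i. i \<in> I \<Longrightarrow> continuous_map T euclidean (f i)" "\<And>i. i \<in> I \<Longrightarrow> closed (S i)"
  shows "closedin T {x \<in> topspace T. \<forall>i\<in>I. f i x \<in> S i}"
proof (cases "I = {}")
  case False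
  have "closedin T {x \<in> topspace T. f i x \<in> S i}" if "i \<in> I" for i
    using closedin_continuous_map_preimage[OF assms(1)[OF that]] assms(2)[OF that] closed_closedin
    by blast
  moreover have "{x \<in> topspace T. \<forall>i\<in>I. f i x \<in> S i}
      = (\<Inter>i\<in>I. {x \<in> topspace T. f i x \<in> S i})"
    using False by auto
  ultimately show ?thesis using False by auto
qed simp

lemma openin_finite_all_preimages:
  assumes "finite I" "\<And>i. i \<in> I \<Longrightarrow> continuous_map T euclidean (f i)" "\<And>i. i \<in> I \<Longrightarrow> open (S i)"
  shows "openin T {x \<in> topspace T. \<forall>i\<in>I. f i x \<in> S i}"
proof -
  have "openin T ((\<Inter>i\<in>I. {x \<in> topspace T. f i x \<in> S i}) \<inter> topspace T)"
    using assms by (intro openin_INT openin_continuous_map_preimage) auto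
  moreover have "{x \<in> topspace T. \<forall>i\<in>I. f i x \<in> S i}
      = (\<Inter>i\<in>I. {x \<in> topspace T. f i x \<in> S i}) \<inter> topspace T"
    by auto
  ultimately show ?thesis by simp
qed

lemma topspace_dual_top: "topspace (dual_top X m) = characters X m"
proof -
  have "characters X m \<in> {{c \<in> characters X m. c ` K \<subseteq> U} | K U. compactin X K \<and> open U}"
    by (rule CollectI, rule exI[of _ "{}"], rule exI[of _ UNIV]) auto
  then show ?thesis
    unfolding dual_top_def compact_open_def topology_generated_by_topspace by blast
qed

lemma closedin_polar_l:
  assumes "\<Phi> \<subseteq> characters B m"
  shows "closedin B (polar_l B m \<Phi>)"
  unfolding polar_l_def using assms
  by (intro closedin_all_preimages closed_Lambda1) (auto simp: characters_def)

lemma openin_positive_on_compact_dual: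
  assumes \<alpha>: "continuous_map X (dual_top (dual_top X m) char_mult) (alpha X m)"
    and K: "compactin (dual_top X m) K"
  shows "openin X {a \<in> topspace X. \<forall>\<psi>\<in>K. 0 < Re (\<psi> a)}"
proof -
  define Op where "Op = {\<Psi> \<in> characters (dual_top X m) char_mult. \<Psi> ` K \<subseteq> {z. 0 < Re z}}"
  have "openin (dual_top (dual_top X m) char_mult) Op"
    unfolding dual_top_def[of "dual_top X m"] compact_open_def Op_def
    by (rule topology_generated_by_Basis) (use K open_halfspace_Re_gt in blast)
  from openin_continuous_map_preimage[OF \<alpha> this]
  have "openin X {a \<in> topspace X. alpha X m a \<in> Op}" .
  moreover have "{a \<in> topspace X. alpha X m a \<in> Op} = {a \<in> topspace X. \<forall>\<psi>\<in>K. 0 < Re (\<psi> a)}"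
  proof -
    have "alpha X m a \<in> characters (dual_top X m) char_mult" if "a \<in> topspace X" for a
      using continuous_map_image_subset_topspace[OF \<alpha>] that by (auto simp: topspace_dual_top)
    moreover have "alpha X m a \<psi> = \<psi> a" if "\<psi> \<in> K" for a \<psi>
      using compactin_subset_topspace[OF K] that by (auto simp: topspace_dual_top alpha_def)
    ultimately show ?thesis unfolding Op_def by auto
  qed
  ultimately show ?thesis by simp
qed

lemma polar_l_polar_r_dual_subset:
  assumes \<alpha>: "alpha X m ` topspace X \<subseteq> characters (dual_top X m) char_mult"
    and K: "K \<subseteq> characters X m"
  shows "polar_l (dual_top X m) char_mult (polar_r (dual_top X m) char_mult K)
           \<subseteq> polar_r X m (polar_l X m K)"
proof
  fix g assume g: "g \<in> polar_l (dual_top X m) char_mult (polar_r (dual_top X m) char_mult K)"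
  then have g_char: "g \<in> characters X m" by (simp add: polar_l_def topspace_dual_top)
  have "g a \<in> Lambda1" if a: "a \<in> polar_l X m K" for a
  proof -
    have "alpha X m a ` K \<subseteq> Lambda1" using a K by (auto simp: polar_l_def alpha_def)
    then have "alpha X m a \<in> polar_r (dual_top X m) char_mult K"
      using \<alpha> a by (auto simp: polar_r_def polar_l_def)
    then show ?thesis using g g_char by (auto simp: polar_l_def alpha_def)
  qed
  then show "g \<in> polar_r X m (polar_l X m K)" using g_char by (auto simp: polar_r_def)
qed

definition circle_hom :: "('a::ab_group_add \<Rightarrow> complex) \<Rightarrow> bool" where
  "circle_hom c \<longleftrightarrow> (\<forall>x. cmod (c x) = 1) \<and> (\<forall>x y. c (x + y) = c x * c y)"

lemma circle_hom_zero:
  assumes "circle_hom c"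
  shows "c 0 = 1"
proof -
  have "c 0 * c 0 = c 0 * 1" using assms unfolding circle_hom_def by (metis add_0 mult_1_right)
  moreover have "c 0 \<noteq> 0" using assms unfolding circle_hom_def by (metis norm_zero zero_neq_one)
  ultimately show ?thesis by (metis mult_left_cancel)
qed

lemma circle_hom_iterated_double:
  assumes "circle_hom c"
  shows "c (((\<lambda>x. x + x) ^^ k) x) = c x ^ 2 ^ k"
proof (induction k)
  case (Suc k)
  then show ?case using assms unfolding circle_hom_def
    by (simp add: power_mult[symmetric] power2_eq_square[symmetric] mult.commute)
qed simp

lemma circle_hom_dist_le:
  assumes "circle_hom c" "circle_hom d"
  shows "dist (c x) (d x) \<le> cmod (c (x - k) - 1) + dist (c k) (d k) + cmod (d (x - k) - 1)"
proof -
  have c: "c x = c k * c (x - k)" "cmod (c k) = 1" and d: "d x = d k * d (x - k)" "cmod (d k) = 1"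
    using assms unfolding circle_hom_def by (metis add.commute diff_add_cancel, blast)+
  have "c x - d x = c k * (c (x - k) - 1) + (c k - d k) + d k * (1 - d (x - k))"
    unfolding c(1) d(1) by (simp add: algebra_simps)
  then have "dist (c x) (d x) \<le> cmod (c k * (c (x - k) - 1)) + cmod (c k - d k) + cmod (d k * (1 - d (x - k)))"
    unfolding dist_norm by (metis norm_triangle_ineq order.trans add_right_mono)
  then show ?thesis by (simp add: norm_mult c(2) d(2) dist_norm norm_minus_commute)
qed

lemma characters_eq_circle_hom:
  fixes X :: "'a::ab_group_add topology"
  assumes "topspace X = UNIV"
  shows "characters X (+) = {c. continuous_map X euclidean c \<and> circle_hom c}"
  using assms by (auto simp: characters_def circle_hom_def)

lemma compactin_pointwise_circle_homs_into_Lambda1: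
  "compactin (product_topology (\<lambda>_. euclidean) UNIV)
     {c :: 'a::ab_group_add \<Rightarrow> complex. circle_hom c \<and> c ` V \<subseteq> Lambda1}"
    (is "compactin ?P ?W")
proof -
  have proj: "continuous_map ?P euclidean (\<lambda>c. c x)" for x
    using continuous_map_product_projection[of x UNIV "\<lambda>_. euclidean"] by simp
  have proj_mult: "continuous_map ?P euclidean (\<lambda>c. c x * c y)" for x y
    using proj[of x] proj[of y] by (simp add: continuous_map_atin tendsto_mult)
  have "?W = {c \<in> topspace ?P. \<forall>x\<in>UNIV. c x \<in> sphere 0 1}
             \<inter> {c \<in> topspace ?P. \<forall>p\<in>UNIV. c (fst p + snd p) - c (fst p) * c (snd p) \<in> {0}}
             \<inter> {c \<in> topspace ?P. \<forall>a\<in>V. c a \<in> Lambda1}"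
    by (auto simp: circle_hom_def)
  moreover have "closedin ?P \<dots>"
    by (intro closedin_Int closedin_all_preimages proj proj_mult continuous_map_diff
        closed_sphere closed_singleton closed_Lambda1)
  ultimately have "closedin ?P ?W" by simp
  moreover have "compactin ?P (PiE UNIV (\<lambda>_. sphere (0::complex) 1))"
    by (simp add: compactin_PiE)
  moreover have "?W \<subseteq> PiE UNIV (\<lambda>_. sphere 0 1)" by (auto simp: circle_hom_def)
  ultimately show ?thesis by (metis closed_compactin)
qed

locale paratopological_ab_group =
  fixes X :: "'a::ab_group_add topology"
  assumes topspace_eq [simp]: "topspace X = UNIV"
    and continuous_add: "continuous_map (prod_topology X X) X (\<lambda>(x, y). x + y)"
begin

lemma continuous_map_add_right: "continuous_map X X (\<lambda>y. y + a)"
proof -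
  have "continuous_map X (prod_topology X X) (\<lambda>y. (y, a))"
    by (intro continuous_map_pairedI continuous_map_id[unfolded id_def]) simp
  from continuous_map_compose[OF this continuous_add] show ?thesis by (simp add: o_def)
qed

lemma continuous_map_iterated_double: "continuous_map X X ((\<lambda>x. x + x) ^^ k)"
proof (induction k)
  case (Suc k)
  have "continuous_map X (prod_topology X X) (\<lambda>y. (y, y))"
    by (intro continuous_map_pairedI continuous_map_id[unfolded id_def])
  from continuous_map_compose[OF this continuous_add]
  have "continuous_map X X (\<lambda>x. x + x)" by (simp add: o_def)
  from continuous_map_compose[OF Suc this] show ?case by (simp only: funpow.simps(2))
qed simp

lemma polar_nhd_equicontinuous_at_zero:
  assumes V: "openin X V" "0 \<in> V" and "0 < \<delta>"
  obtains N where "openin X N" "0 \<in> N"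
    "\<And>c n. circle_hom c \<Longrightarrow> c ` V \<subseteq> Lambda1 \<Longrightarrow> n \<in> N \<Longrightarrow> cmod (c n - 1) < \<delta>"
proof -
  obtain j where "(inverse 2 :: real) ^ j < \<delta>\<^sup>2 / 2"
    using real_arch_pow_inv[of "\<delta>\<^sup>2 / 2" "inverse 2"] \<open>0 < \<delta>\<close> by auto
  then have j: "2 / 2 ^ j < \<delta>\<^sup>2" by (simp add: field_simps)
  define N where "N = (\<Inter>k\<in>{..j}. {x \<in> topspace X. ((\<lambda>x. x + x) ^^ k) x \<in> V})"
  have "((\<lambda>x. x + x) ^^ k) 0 = (0::'a)" for k by (induction k) auto
  then have "0 \<in> N" unfolding N_def using V(2) by simp
  moreover have "openin X N" unfolding N_def
    by (intro openin_INT2 openin_continuous_map_preimage[OF continuous_map_iterated_double V(1)]) auto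
  moreover have "cmod (c n - 1) < \<delta>" if c: "circle_hom c" "c ` V \<subseteq> Lambda1" and "n \<in> N" for c n
  proof -
    have "c n ^ 2 ^ k \<in> Lambda1" if "k \<le> j" for k
      using \<open>n \<in> N\<close> that c(2) unfolding N_def circle_hom_iterated_double[OF c(1), symmetric] by auto
    then have "(cmod (c n - 1))\<^sup>2 < \<delta>\<^sup>2"
      using cmod_diff_one_sq_le_if_powers_in_Lambda1[of j "c n"] j by auto
    then show ?thesis using \<open>0 < \<delta>\<close> by (meson norm_ge_zero power_less_imp_less_base less_imp_le)
  qed
  ultimately show ?thesis using that by blast
qed

lemma continuous_map_circle_hom_if_polar_nhd:
  assumes V: "openin X V" "0 \<in> V" and c: "circle_hom c" "c ` V \<subseteq> Lambda1"
  shows "continuous_map X euclidean c"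
  unfolding mtopology_is_euclidean[symmetric] Met_TC.continuous_map_to_metric mball_eq_ball
proof (intro ballI allI impI)
  fix x and e :: real assume "0 < e"
  then obtain N where N: "openin X N" "0 \<in> N" and small: "\<And>n. n \<in> N \<Longrightarrow> cmod (c n - 1) < e"
    using polar_nhd_equicontinuous_at_zero[OF V] c by metis
  define U where "U = {y \<in> topspace X. y + - x \<in> N}"
  have "openin X U" unfolding U_def by (rule openin_continuous_map_preimage[OF continuous_map_add_right N(1)])
  moreover have "x \<in> U" using N(2) unfolding U_def by simp
  moreover have "c y \<in> ball (c x) e" if "y \<in> U" for y
  proof -
    have "c y = c x * c (y - x)" and "cmod (c x) = 1"
      using c(1) unfolding circle_hom_def by (metis add.commute diff_add_cancel, blast)
    then have "c x - c y = c x * (1 - c (y - x))" "cmod (c x) = 1" by (simp_all add: algebra_simps)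
    then have "dist (c x) (c y) = cmod (c (y - x) - 1)"
      by (simp add: dist_norm norm_mult norm_minus_commute)
    then show ?thesis using small that unfolding U_def by simp
  qed
  ultimately show "\<exists>U. openin X U \<and> x \<in> U \<and> (\<forall>y\<in>U. c y \<in> ball (c x) e)" by blast
qed

lemma polar_r_nhd_eq:
  assumes "openin X V" "0 \<in> V"
  shows "polar_r X (+) V = {c. circle_hom c \<and> c ` V \<subseteq> Lambda1}"
  using continuous_map_circle_hom_if_polar_nhd[OF assms]
  by (auto simp: polar_r_def characters_eq_circle_hom)

lemma compactin_finite_translates_cover:
  assumes K: "compactin X K" and N: "openin X N" "0 \<in> N"
  obtains F where "finite F" "\<And>x. x \<in> K \<Longrightarrow> \<exists>k\<in>F. x - k \<in> N"
proof -
  have "openin X {y. y - k \<in> N}" for k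
    using openin_continuous_map_preimage[OF continuous_map_add_right[of "- k"] N(1)] by simp
  moreover have "K \<subseteq> (\<Union>k\<in>K. {y. y - k \<in> N})" using N(2) by force
  ultimately obtain \<F> where "finite \<F>" "\<F> \<subseteq> (\<lambda>k. {y. y - k \<in> N}) ` K" "K \<subseteq> \<Union>\<F>"
    using compactinD[OF K, of "(\<lambda>k. {y. y - k \<in> N}) ` K"] by blast
  then obtain F where "finite F" "K \<subseteq> (\<Union>k\<in>F. {y. y - k \<in> N})"
    by (metis finite_subset_image)
  then show ?thesis using that by blast
qed

lemma polar_nhd_pointwise_approx_on_compact:
  assumes V: "openin X V" "0 \<in> V" and K: "compactin X K" and U: "open U"
    and c0: "circle_hom c0" "c0 ` V \<subseteq> Lambda1" "c0 ` K \<subseteq> U"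
  obtains F r where "finite F" "0 < r"
    "\<And>c. circle_hom c \<Longrightarrow> c ` V \<subseteq> Lambda1 \<Longrightarrow> \<forall>k\<in>F. dist (c0 k) (c k) < r \<Longrightarrow> c ` K \<subseteq> U"
proof -
  have "compact (c0 ` K)"
    using image_compactin[OF K continuous_map_circle_hom_if_polar_nhd[OF V c0(1,2)]] by simp
  then obtain e where "0 < e" and e: "(\<Union>x\<in>c0 ` K. ball x e) \<subseteq> U"
    using compact_subset_open_imp_ball_epsilon_subset[OF _ U c0(3)] by blast
  then obtain N where N: "openin X N" "0 \<in> N"
    and small: "\<And>c n. circle_hom c \<Longrightarrow> c ` V \<subseteq> Lambda1 \<Longrightarrow> n \<in> N \<Longrightarrow> cmod (c n - 1) < e / 3"
    using polar_nhd_equicontinuous_at_zero[OF V, of "e / 3"] by auto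
  obtain F where F: "finite F" "\<And>x. x \<in> K \<Longrightarrow> \<exists>k\<in>F. x - k \<in> N"
    using compactin_finite_translates_cover[OF K N] by blast
  have "c ` K \<subseteq> U"
    if c: "circle_hom c" "c ` V \<subseteq> Lambda1" and close: "\<forall>k\<in>F. dist (c0 k) (c k) < e / 3" for c
  proof
    fix y assume "y \<in> c ` K"
    then obtain x where x: "x \<in> K" "y = c x" by blast
    then obtain k where k: "k \<in> F" "x - k \<in> N" using F(2) by blast
    have "dist (c0 x) (c x) \<le> cmod (c0 (x - k) - 1) + dist (c0 k) (c k) + cmod (c (x - k) - 1)"
      by (rule circle_hom_dist_le[OF c0(1) c(1)])
    also have "\<dots> < e / 3 + e / 3 + e / 3"
      using small[OF c0(1,2) k(2)] small[OF c k(2)] close k(1) by (intro add_strict_mono) auto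
    finally have "c x \<in> ball (c0 x) e" by simp
    then show "y \<in> U" using e x by blast
  qed
  moreover have "0 < e / 3" using \<open>0 < e\<close> by simp
  ultimately show ?thesis using that[OF F(1)] by blast
qed

lemma continuous_map_pointwise_to_dual_top_on_polar:
  assumes "openin X V" "0 \<in> V"
  shows "continuous_map (subtopology (product_topology (\<lambda>_. euclidean) UNIV) (polar_r X (+) V))
           (dual_top X (+)) id"
    (is "continuous_map (subtopology ?P ?W) _ _")
  unfolding dual_top_def compact_open_def
proof (rule continuous_on_generated_topo)
  show "id ` topspace (subtopology ?P ?W)
      \<subseteq> \<Union>{{c \<in> characters X (+). c ` K \<subseteq> U} | K U. compactin X K \<and> open U}"
    using topspace_dual_top[of X "(+)"]
    unfolding dual_top_def compact_open_def topology_generated_by_topspace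
    by (auto simp: polar_r_def)
next
  fix G assume "G \<in> {{c \<in> characters X (+). c ` K \<subseteq> U} | K U. compactin X K \<and> open U}"
  then obtain K U where G: "G = {c \<in> characters X (+). c ` K \<subseteq> U}" and K: "compactin X K" "open U"
    by blast
  have "openin (subtopology ?P ?W) (?W \<inter> G)"
  proof (subst openin_subopen, intro ballI)
    fix c0 assume c0: "c0 \<in> ?W \<inter> G"
    then have "c0 \<in> {c. circle_hom c \<and> c ` V \<subseteq> Lambda1}" unfolding polar_r_nhd_eq[OF assms] by blast
    then have c0_hom: "circle_hom c0" "c0 ` V \<subseteq> Lambda1" by simp_all
    have "c0 ` K \<subseteq> U" using c0 G by blast
    then obtain F r where F: "finite F" "0 < r" and approx:
        "\<And>c. circle_hom c \<Longrightarrow> c ` V \<subseteq> Lambda1 \<Longrightarrow> \<forall>k\<in>F. dist (c0 k) (c k) < r \<Longrightarrow> c ` K \<subseteq> U"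
      using polar_nhd_pointwise_approx_on_compact[OF assms K c0_hom] by blast
    define T where "T = {c \<in> topspace ?P. \<forall>k\<in>F. c k \<in> ball (c0 k) r}"
    have "openin ?P T" unfolding T_def
      by (intro openin_finite_all_preimages F(1) continuous_map_product_projection) auto
    then have "openin (subtopology ?P ?W) (?W \<inter> T)" by (rule openin_subtopology_Int2)
    moreover have "c0 \<in> ?W \<inter> T" using c0 F(2) unfolding T_def by auto
    moreover have "?W \<inter> T \<subseteq> ?W \<inter> G"
    proof
      fix c assume c: "c \<in> ?W \<inter> T"
      then have "c \<in> characters X (+)" by (simp add: polar_r_def)
      moreover have "c ` K \<subseteq> U"
        using c approx[of c] unfolding T_def polar_r_nhd_eq[OF assms] by (simp add: dist_commute)
      ultimately show "c \<in> ?W \<inter> G" using c G by blast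
    qed
    ultimately show "\<exists>T'. openin (subtopology ?P ?W) T' \<and> c0 \<in> T' \<and> T' \<subseteq> ?W \<inter> G" by blast
  qed
  then show "openin (subtopology ?P ?W) (id -` G \<inter> topspace (subtopology ?P ?W))"
    by (simp add: Int_commute)
qed

lemma compactin_dual_top_polar_nhd:
  assumes "openin X V" "0 \<in> V"
  shows "compactin (dual_top X (+)) (polar_r X (+) V)"
proof -
  have "compactin (subtopology (product_topology (\<lambda>_. euclidean) UNIV) (polar_r X (+) V))
          (polar_r X (+) V)"
    using compactin_pointwise_circle_homs_into_Lambda1[of V] by (simp add: polar_r_nhd_eq[OF assms])
  from image_compactin[OF this continuous_map_pointwise_to_dual_top_on_polar[OF assms]]
  show ?thesis by simp
qed

end

theorem mainTheorem7:
  fixes X :: "'a::ab_group_add topology"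
  assumes "topspace X = UNIV"
    and "continuous_map (prod_topology X X) X (\<lambda>(x, y). x + y)"
    and "continuous_map X X uminus"
    and "continuous_map X (dual_top (dual_top X (+)) char_mult) (alpha X (+))"
  shows "QCP (dual_top X (+)) char_mult"
  unfolding QCP_def
proof (intro allI impI)
  interpret paratopological_ab_group X using assms(1,2) by unfold_locales
  let ?A' = "dual_top X (+)"
  fix K assume K: "compactin ?A' K"
  let ?K' = "polar_l ?A' char_mult (polar_r ?A' char_mult K)"
  have K_chars: "K \<subseteq> characters X (+)"
    using compactin_subset_topspace[OF K] by (simp add: topspace_dual_top)
  define V where "V = {a \<in> topspace X. \<forall>\<psi>\<in>K. 0 < Re (\<psi> a)}"
  have V_open: "openin X V" unfolding V_def using openin_positive_on_compact_dual[OF assms(4) K] .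
  have "0 \<in> V"
  proof -
    have "circle_hom \<psi>" if "\<psi> \<in> K" for \<psi>
      using subsetD[OF K_chars that] by (simp add: characters_eq_circle_hom)
    then show ?thesis by (simp add: V_def circle_hom_zero)
  qed
  have "V \<subseteq> polar_l X (+) K"
    using K_chars by (force simp: V_def polar_l_def Lambda1_def characters_def)
  have "?K' \<subseteq> polar_r X (+) (polar_l X (+) K)"
    using polar_l_polar_r_dual_subset[OF _ K_chars] continuous_map_image_subset_topspace[OF assms(4)]
    by (simp add: topspace_dual_top)
  also have "\<dots> \<subseteq> polar_r X (+) V"
    using \<open>V \<subseteq> polar_l X (+) K\<close> by (auto simp: polar_r_def)
  finally have "?K' \<subseteq> polar_r X (+) V" .
  moreover have "closedin ?A' ?K'"
    by (rule closedin_polar_l) (auto simp: polar_r_def topspace_dual_top)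
  ultimately show "compactin ?A' ?K'"
    using closed_compactin compactin_dual_top_polar_nhd[OF V_open \<open>0 \<in> V\<close>] by blast
qed

end
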